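(* Let $F$ be a free group of rank greater than one. Let $H$ be a finitely generated subgroup of infinite index in $F$ and let $\{\gamma_1,\ldots,\gamma_n\}$ be a finite subset of $F\smallsetminus H$. Then there exist an integer $k$ and a surjective homomorphism $f\colon F\to S_k$ onto the symmetric group $S_k$ such that $f(\gamma_i)\notin f(H)$ for all $i=1,\ldots,n$. *)

theory Defs
  imports "HOL-Algebra.Algebra"
begin

text \<open>Words over a set of letters: a letter is a pair (x, b), meaning x if b = True and
  the inverse of x if b = False.\<close>

definition word_eval :: "('a, 'b) monoid_scheme \<Rightarrow> ('a \<times> bool) list \<Rightarrow> 'a" where
  "word_eval G ws = foldr (\<lambda>(x, b) acc. (if b then x else inv\<^bsub>G\<^esub> x) \<otimes>\<^bsub>G\<^esub> acc) ws \<one>\<^bsub>G\<^esub>"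

definition reduced_word :: "('a \<times> bool) list \<Rightarrow> bool" where
  "reduced_word ws \<longleftrightarrow>
     (\<forall>i. Suc i < length ws \<longrightarrow>
        \<not> (fst (ws ! i) = fst (ws ! Suc i) \<and> snd (ws ! i) \<noteq> snd (ws ! Suc i)))"

definition free_basis :: "('a, 'b) monoid_scheme \<Rightarrow> 'a set \<Rightarrow> bool" where
  "free_basis G B \<longleftrightarrow>
     B \<subseteq> carrier G \<and> generate G B = carrier G \<and>
     (\<forall>ws. ws \<noteq> [] \<and> set (map fst ws) \<subseteq> B \<and> reduced_word ws \<longrightarrow> word_eval G ws \<noteq> one G)"

definition free_group_rank_gt_one :: "('a, 'b) monoid_scheme \<Rightarrow> bool" where
  "free_group_rank_gt_one G \<longleftrightarrow> group G \<and>
     (\<exists>B. free_basis G B \<and> (\<exists>a b. a \<in> B \<and> b \<in> B \<and> a \<noteq> b))"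

definition fin_gen_subgroup :: "'a set \<Rightarrow> ('a, 'b) monoid_scheme \<Rightarrow> bool" where
  "fin_gen_subgroup H G \<longleftrightarrow> subgroup H G \<and>
     (\<exists>S. finite S \<and> S \<subseteq> carrier G \<and> H = generate G S)"

end

theory Submission
  imports Defs
begin

text \<open>
  Write the generators of H and the elements \<gamma> as words in a free basis B and let V
  be the finite set of right cosets H g visited when these words are read letter by letter
  (a finite piece of the Schreier coset graph of H).  Each basis letter c acts on V as a
  partial injection; extending these partial injections to permutations of V gives a
  homomorphism \<rho> for which H fixes the point H and each \<gamma> moves it.  Because H has
  infinite index, some letter a is not defined everywhere on V; this freedom is used to
  adjoin points and long cycles to the permutations of two letters a and b so that the
  image of \<rho> contains all 3-cycles on a large set, is transitive and contains an odd
  permutation, and therefore is the whole symmetric group.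
\<close>

section \<open>Words and the universal property of a free basis\<close>

definition inv_word :: "('c \<times> bool) list \<Rightarrow> ('c \<times> bool) list" where
  "inv_word ws = rev (map (\<lambda>(x, b). (x, \<not> b)) ws)"

lemma word_eval_Nil[simp]: "word_eval G [] = \<one>\<^bsub>G\<^esub>"
  by (simp add: word_eval_def)

lemma word_eval_Cons[simp]:
  "word_eval G ((x, b) # ws) = (if b then x else inv\<^bsub>G\<^esub> x) \<otimes>\<^bsub>G\<^esub> word_eval G ws"
  by (simp add: word_eval_def)

context group begin

lemma word_eval_closed:
  "set (map fst ws) \<subseteq> carrier G \<Longrightarrow> word_eval G ws \<in> carrier G"
  by (induction ws) auto

lemma word_eval_append:
  "set (map fst ws) \<subseteq> carrier G \<Longrightarrow> set (map fst vs) \<subseteq> carrier G \<Longrightarrow>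
   word_eval G (ws @ vs) = word_eval G ws \<otimes> word_eval G vs"
  by (induction ws) (auto simp: m_assoc word_eval_closed)

lemma word_eval_inv_word:
  "set (map fst ws) \<subseteq> carrier G \<Longrightarrow> word_eval G (inv_word ws) = inv (word_eval G ws)"
proof (induction ws)
  case Nil then show ?case by (simp add: inv_word_def)
next
  case (Cons l ws)
  obtain x b where l: "l = (x, b)" by force
  have x: "x \<in> carrier G" and ws: "set (map fst ws) \<subseteq> carrier G" using Cons.prems l by auto
  have "inv_word (l # ws) = inv_word ws @ [(x, \<not> b)]" by (simp add: inv_word_def l)
  moreover have "set (map fst (inv_word ws)) \<subseteq> carrier G" using ws by (auto simp: inv_word_def)
  ultimately have "word_eval G (inv_word (l # ws)) = inv (word_eval G ws) \<otimes> (if \<not> b then x else inv x)"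
    using Cons x ws by (simp add: word_eval_append)
  also have "\<dots> = inv ((if b then x else inv x) \<otimes> word_eval G ws)"
    using x ws by (simp add: inv_mult_group word_eval_closed)
  finally show ?case by (simp add: l)
qed

lemma word_eval_cancel:
  assumes "set (map fst ws) \<subseteq> carrier G" "Suc i < length ws"
    "fst (ws ! i) = fst (ws ! Suc i)" "snd (ws ! i) \<noteq> snd (ws ! Suc i)"
  shows "word_eval G ws = word_eval G (take i ws @ drop (Suc (Suc i)) ws)"
proof -
  let ?pre = "take i ws" and ?suf = "drop (Suc (Suc i)) ws"
  obtain x b where l1: "ws ! i = (x, b)" by force
  have l2: "ws ! Suc i = (x, \<not> b)" using assms(3,4) l1 by (cases "ws ! Suc i") auto
  have split: "ws = ?pre @ [(x, b), (x, \<not> b)] @ ?suf"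
    using assms(2) l1 l2 by (metis Cons_nth_drop_Suc Suc_lessD append_Cons append_self_conv2 append_take_drop_id)
  have x: "x \<in> carrier G" using assms(1,2) l1
    by (metis Suc_lessD fst_conv image_eqI list.set_map nth_mem subsetD)
  have pre: "set (map fst ?pre) \<subseteq> carrier G" and suf: "set (map fst ?suf) \<subseteq> carrier G"
    using assms(1) by (auto dest: in_set_takeD in_set_dropD)
  have pair: "word_eval G ([(x, b), (x, \<not> b)] @ ?suf) = word_eval G ?suf"
    using x suf by (auto simp: word_eval_closed m_assoc[symmetric])
  have "word_eval G ws = word_eval G ?pre \<otimes> word_eval G ([(x, b), (x, \<not> b)] @ ?suf)"
    using pre suf x by (subst split) (simp add: word_eval_append del: append.simps)
  also have "\<dots> = word_eval G (?pre @ ?suf)"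
    using pre suf by (simp only: pair word_eval_append)
  finally show ?thesis .
qed

end

abbreviation map_letters :: "('c \<Rightarrow> 'd) \<Rightarrow> ('c \<times> bool) list \<Rightarrow> ('d \<times> bool) list" where
  "map_letters \<sigma> ws \<equiv> map (\<lambda>(x, b). (\<sigma> x, b)) ws"

lemma map_letters_in:
  "set (map fst w) \<subseteq> B \<Longrightarrow> \<sigma> ` B \<subseteq> C \<Longrightarrow> set (map fst (map_letters \<sigma> w)) \<subseteq> C"
  by (induction w) (auto simp: image_subset_iff)

lemma free_basis_word_exists:
  assumes F: "group F" and fb: "free_basis F B" and g: "g \<in> carrier F"
  shows "\<exists>ws. set (map fst ws) \<subseteq> B \<and> word_eval F ws = g"
proof -
  have B: "B \<subseteq> carrier F" using fb by (simp add: free_basis_def)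
  have "g \<in> generate F B" using fb g by (simp add: free_basis_def)
  then show ?thesis
  proof (induction g rule: generate.induct)
    case one then show ?case by (rule exI[of _ "[]"]) simp
  next
    case (incl h) then show ?case using B F
      by (intro exI[of _ "[(h, True)]"]) (auto simp: group.is_monoid monoid.r_one)
  next
    case (inv h) then show ?case using B F
      by (intro exI[of _ "[(h, False)]"]) (auto simp: group.is_monoid monoid.r_one group.inv_closed)
  next
    case (eng h1 h2)
    then obtain w1 w2 where "set (map fst w1) \<subseteq> B" "word_eval F w1 = h1"
      "set (map fst w2) \<subseteq> B" "word_eval F w2 = h2" by blast
    then show ?case using B F
      by (intro exI[of _ "w1 @ w2"]) (auto simp: group.word_eval_append)
  qed
qed

locale free_basis_map =
  fixes F :: "('a, 'b) monoid_scheme" and B :: "'a set"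
    and G :: "('c, 'd) monoid_scheme" and \<sigma> :: "'a \<Rightarrow> 'c"
  assumes F: "group F" and basis: "free_basis F B"
    and G: "group G" and images: "\<sigma> ` B \<subseteq> carrier G"
begin

definition extension :: "'a \<Rightarrow> 'c" where
  "extension g = word_eval G (map_letters \<sigma> (SOME ws. set (map fst ws) \<subseteq> B \<and> word_eval F ws = g))"

lemma B_carrier: "B \<subseteq> carrier F"
  using basis by (simp add: free_basis_def)

lemma image_word_closed: "set (map fst w) \<subseteq> B \<Longrightarrow> word_eval G (map_letters \<sigma> w) \<in> carrier G"
  using group.word_eval_closed[OF G] map_letters_in[OF _ images] by blast

text \<open>
  Freeness: a word over B with trivial value in F has trivial image in G.  By freeness a
  nonempty such word is not reduced, and cancelling a pair of letters reduces its length.\<close>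

lemma relator_image_trivial:
  "set (map fst ws) \<subseteq> B \<Longrightarrow> word_eval F ws = \<one>\<^bsub>F\<^esub> \<Longrightarrow> word_eval G (map_letters \<sigma> ws) = \<one>\<^bsub>G\<^esub>"
proof (induction "length ws" arbitrary: ws rule: less_induct)
  case less
  show ?case
  proof (cases "ws = []")
    case True then show ?thesis by simp
  next
    case False
    then have "\<not> reduced_word ws" using basis less.prems by (auto simp: free_basis_def)
    then obtain i where i: "Suc i < length ws" "fst (ws ! i) = fst (ws ! Suc i)" "snd (ws ! i) \<noteq> snd (ws ! Suc i)"
      by (auto simp: reduced_word_def)
    define ws' where "ws' = take i ws @ drop (Suc (Suc i)) ws"
    have shorter: "length ws' < length ws" using i(1) by (simp add: ws'_def)
    have ws'_B: "set (map fst ws') \<subseteq> B" using less.prems(1)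
      by (auto simp: ws'_def dest: in_set_takeD in_set_dropD)
    have "word_eval F ws' = \<one>\<^bsub>F\<^esub>"
      unfolding ws'_def using group.word_eval_cancel[OF F _ i] less.prems B_carrier by auto
    then have "word_eval G (map_letters \<sigma> ws') = \<one>\<^bsub>G\<^esub>" using less.hyps[OF shorter ws'_B] by simp
    moreover have "map_letters \<sigma> ws' = take i (map_letters \<sigma> ws) @ drop (Suc (Suc i)) (map_letters \<sigma> ws)"
      by (simp add: ws'_def take_map drop_map)
    moreover have "word_eval G (map_letters \<sigma> ws) =
        word_eval G (take i (map_letters \<sigma> ws) @ drop (Suc (Suc i)) (map_letters \<sigma> ws))"
      by (rule group.word_eval_cancel[OF G]) (use less.prems(1) images i in \<open>auto simp: case_prod_beta\<close>)
    ultimately show ?thesis by simp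
  qed
qed

lemma image_well_defined:
  assumes w1: "set (map fst w1) \<subseteq> B" and w2: "set (map fst w2) \<subseteq> B"
    and eq: "word_eval F w1 = word_eval F w2"
  shows "word_eval G (map_letters \<sigma> w1) = word_eval G (map_letters \<sigma> w2)"
proof -
  have w1': "set (map fst (inv_word w1)) \<subseteq> B" using w1 by (auto simp: inv_word_def)
  have "word_eval F (inv_word w1 @ w2) = \<one>\<^bsub>F\<^esub>"
    using w1 w2 w1' B_carrier eq
    by (simp add: group.word_eval_append[OF F] group.word_eval_inv_word[OF F]
        group.word_eval_closed[OF F] group.l_inv[OF F] subset_trans)
  then have "word_eval G (map_letters \<sigma> (inv_word w1 @ w2)) = \<one>\<^bsub>G\<^esub>"
    by (intro relator_image_trivial) (use w1' w2 in auto)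
  moreover have "map_letters \<sigma> (inv_word w1) = inv_word (map_letters \<sigma> w1)"
    by (simp add: inv_word_def rev_map case_prod_beta)
  moreover have im: "set (map fst (map_letters \<sigma> w1)) \<subseteq> carrier G" "set (map fst (map_letters \<sigma> w2)) \<subseteq> carrier G"
    using map_letters_in[OF w1 images] map_letters_in[OF w2 images] .
  moreover have "set (map fst (inv_word (map_letters \<sigma> w1))) \<subseteq> carrier G"
    using im by (auto simp: inv_word_def)
  ultimately have "inv\<^bsub>G\<^esub> word_eval G (map_letters \<sigma> w1) \<otimes>\<^bsub>G\<^esub> word_eval G (map_letters \<sigma> w2) = \<one>\<^bsub>G\<^esub>"
    by (simp add: group.word_eval_append[OF G] group.word_eval_inv_word[OF G])
  then show ?thesis
    using image_word_closed[OF w1] image_word_closed[OF w2]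
    by (metis G group.inv_equality group.inv_inv group.inv_closed)
qed

lemma extension_word:
  assumes w: "set (map fst w) \<subseteq> B"
  shows "extension (word_eval F w) = word_eval G (map_letters \<sigma> w)"
proof -
  let ?P = "\<lambda>ws. set (map fst ws) \<subseteq> B \<and> word_eval F ws = word_eval F w"
  have "?P (SOME ws. ?P ws)" by (rule someI[of ?P w]) (use w in auto)
  then show ?thesis unfolding extension_def using image_well_defined[OF _ w] by blast
qed

lemma extension_hom: "extension \<in> hom F G"
proof (rule homI)
  fix x assume "x \<in> carrier F"
  then obtain w where w: "set (map fst w) \<subseteq> B" "word_eval F w = x"
    using free_basis_word_exists[OF F basis] by blast
  then show "extension x \<in> carrier G" using extension_word image_word_closed by metis
next
  fix x y assume "x \<in> carrier F" "y \<in> carrier F"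
  then obtain w v where w: "set (map fst w) \<subseteq> B" "word_eval F w = x"
    and v: "set (map fst v) \<subseteq> B" "word_eval F v = y"
    using free_basis_word_exists[OF F basis] by metis
  have wv: "set (map fst (w @ v)) \<subseteq> B" using w v by auto
  have "x \<otimes>\<^bsub>F\<^esub> y = word_eval F (w @ v)" using w v B_carrier
    by (simp add: group.word_eval_append[OF F] subset_trans)
  then show "extension (x \<otimes>\<^bsub>F\<^esub> y) = extension x \<otimes>\<^bsub>G\<^esub> extension y"
    using extension_word[OF wv] extension_word[OF w(1)] extension_word[OF v(1)] w v
      map_letters_in[OF w(1) images] map_letters_in[OF v(1) images]
    by (simp add: group.word_eval_append[OF G])
qed

lemma extension_basis:
  assumes x: "x \<in> B" shows "extension x = \<sigma> x"
proof -
  have "word_eval F [(x, True)] = x"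
    using x B_carrier by (simp add: group.is_monoid[OF F] monoid.r_one subsetD)
  then show ?thesis using extension_word[of "[(x, True)]"] x images
    by (auto simp: group.is_monoid[OF G] monoid.r_one)
qed

end

section \<open>Subgroups of a symmetric group containing many 3-cycles\<close>

definition has_3cycle :: "(nat \<Rightarrow> nat) set \<Rightarrow> nat \<Rightarrow> nat \<Rightarrow> nat \<Rightarrow> bool" where
  "has_3cycle G x y z \<longleftrightarrow> x \<noteq> y \<and> y \<noteq> z \<and> x \<noteq> z \<and> cycle_of_list [x, y, z] \<in> G"

definition all_3cycles_on :: "(nat \<Rightarrow> nat) set \<Rightarrow> nat set \<Rightarrow> bool" where
  "all_3cycles_on G S \<longleftrightarrow>
     (\<forall>x\<in>S. \<forall>y\<in>S. \<forall>z\<in>S. x \<noteq> y \<and> y \<noteq> z \<and> x \<noteq> z \<longrightarrow> has_3cycle G x y z)"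

lemma all_3cycles_onI:
  "(\<And>x y z. x \<in> S \<Longrightarrow> y \<in> S \<Longrightarrow> z \<in> S \<Longrightarrow> x \<noteq> y \<Longrightarrow> y \<noteq> z \<Longrightarrow> x \<noteq> z \<Longrightarrow> has_3cycle G x y z)
   \<Longrightarrow> all_3cycles_on G S"
  by (simp add: all_3cycles_on_def)

lemma all_3cycles_onD:
  "all_3cycles_on G S \<Longrightarrow> x \<in> S \<Longrightarrow> y \<in> S \<Longrightarrow> z \<in> S \<Longrightarrow> x \<noteq> y \<Longrightarrow> y \<noteq> z \<Longrightarrow> x \<noteq> z \<Longrightarrow>
   has_3cycle G x y z"
  by (simp add: all_3cycles_on_def)

lemma cycle3_apply:
  assumes "x \<noteq> y" "y \<noteq> z" "x \<noteq> z"
  shows "cycle_of_list [x, y, z] w = (if w = x then y else if w = y then z else if w = z then x else w)"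
  using assms by (auto simp: transpose_def)

lemma cycle3_rotate:
  assumes "x \<noteq> y" "y \<noteq> z" "x \<noteq> z"
  shows "cycle_of_list [x, y, z] = cycle_of_list [y, z, x]"
proof (rule ext)
  fix w
  have "y \<noteq> z" "z \<noteq> x" "y \<noteq> x" using assms by auto
  then show "cycle_of_list [x, y, z] w = cycle_of_list [y, z, x] w"
    unfolding cycle3_apply[OF assms] cycle3_apply[of y z x] using assms by auto
qed

lemma cycle3_square:
  assumes "x \<noteq> y" "y \<noteq> z" "x \<noteq> z"
  shows "cycle_of_list [x, y, z] \<circ> cycle_of_list [x, y, z] = cycle_of_list [z, y, x]"
proof (rule ext)
  fix w
  have "z \<noteq> y" "y \<noteq> x" "z \<noteq> x" using assms by auto
  then show "(cycle_of_list [x, y, z] \<circ> cycle_of_list [x, y, z]) w = cycle_of_list [z, y, x] w"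
    unfolding comp_apply cycle3_apply[OF assms] cycle3_apply[of z y x] using assms by auto
qed

lemma card_ge_2_obtain:
  assumes "finite A" "2 \<le> card A"
  obtains a b where "a \<in> A" "b \<in> A" "a \<noteq> b"
proof -
  have "\<not> card A \<le> Suc 0" using assms(2) by simp
  then show ?thesis using that card_le_Suc0_iff_eq[OF assms(1)] by blast
qed

locale perm_subgroup =
  fixes G :: "(nat \<Rightarrow> nat) set" and n :: nat
  assumes subgroup: "subgroup G (sym_group n)"
begin

lemma mem_permutes: "g \<in> G \<Longrightarrow> g permutes {1..n}"
  using subgroup.subset[OF subgroup] by (auto simp: sym_group_carrier)

lemma comp_closed: "g \<in> G \<Longrightarrow> h \<in> G \<Longrightarrow> g \<circ> h \<in> G"
  using subgroup.m_closed[OF subgroup] by (simp add: sym_group_mult)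

lemma inv_closed: "g \<in> G \<Longrightarrow> inv' g \<in> G"
  using subgroup.m_inv_closed[OF subgroup] subgroup.subset[OF subgroup] sym_group_inv_equality by force

lemma id_closed: "id \<in> G"
  using subgroup.one_closed[OF subgroup] by (simp add: sym_group_one)

lemma funpow_closed: "g \<in> G \<Longrightarrow> g ^^ k \<in> G"
  by (induction k) (auto simp: id_closed comp_closed)

lemma has_3cycle_rotate: "has_3cycle G x y z \<Longrightarrow> has_3cycle G y z x"
  unfolding has_3cycle_def using cycle3_rotate[of x y z] by simp

lemma has_3cycle_reverse: "has_3cycle G x y z \<Longrightarrow> has_3cycle G z y x"
  unfolding has_3cycle_def using cycle3_square[of x y z] comp_closed by fastforce

lemma has_3cycle_perms:
  "has_3cycle G x y z \<Longrightarrow>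
   has_3cycle G y x z \<and> has_3cycle G x z y \<and> has_3cycle G z y x \<and> has_3cycle G y z x \<and> has_3cycle G z x y"
  using has_3cycle_rotate has_3cycle_reverse by blast

text \<open>Conjugating a 3-cycle by g \<in> G renames its entries along g.\<close>

lemma has_3cycle_conj:
  assumes "has_3cycle G x y z" "g \<in> G"
  shows "has_3cycle G (g x) (g y) (g z)"
proof -
  have b: "bij g" using mem_permutes[OF assms(2)] permutes_bij by blast
  have d: "distinct [x, y, z]" and c: "cycle_of_list [x, y, z] \<in> G"
    using assms(1) by (auto simp: has_3cycle_def)
  have "g \<circ> cycle_of_list [x, y, z] \<circ> inv' g = cycle_of_list (map g [x, y, z])"
    by (rule conjugation_of_cycle[OF d b])
  moreover have "g \<circ> cycle_of_list [x, y, z] \<circ> inv' g \<in> G"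
    using c assms(2) by (intro comp_closed inv_closed)
  moreover have "g x \<noteq> g y" "g y \<noteq> g z" "g x \<noteq> g z"
    using d bij_is_inj[OF b] by (auto simp: inj_eq)
  ultimately show ?thesis unfolding has_3cycle_def by simp
qed

lemma all_3cycles_on_image:
  assumes "all_3cycles_on G S" "g \<in> G"
  shows "all_3cycles_on G (g ` S)"
  using has_3cycle_conj[OF all_3cycles_onD[OF assms(1)] assms(2)] by (auto intro!: all_3cycles_onI)

text \<open>Two 3-cycles sharing the entries a, b produce a third one: conjugate (a b d) by (a b c).\<close>

lemma has_3cycle_propagate:
  assumes "has_3cycle G a b c" "has_3cycle G a b d" "c \<noteq> d"
  shows "has_3cycle G b c d"
proof -
  have c: "cycle_of_list [a, b, c] \<in> G" and d: "a \<noteq> b" "b \<noteq> c" "a \<noteq> c" "a \<noteq> d" "b \<noteq> d"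
    using assms by (auto simp: has_3cycle_def)
  have "has_3cycle G (cycle_of_list [a, b, c] a) (cycle_of_list [a, b, c] b) (cycle_of_list [a, b, c] d)"
    by (rule has_3cycle_conj[OF assms(2) c])
  moreover have "cycle_of_list [a, b, c] a = b" "cycle_of_list [a, b, c] b = c" "cycle_of_list [a, b, c] d = d"
    unfolding cycle3_apply[OF d(1-3)] using d assms(3) by auto
  ultimately show ?thesis by simp
qed

lemma all_3cycles_on_from_pair:
  assumes cd: "c \<noteq> d" "c \<in> S" "d \<in> S"
    and star: "\<And>x. x \<in> S \<Longrightarrow> x \<noteq> c \<Longrightarrow> x \<noteq> d \<Longrightarrow> has_3cycle G c d x"
  shows "all_3cycles_on G S"
proof (rule all_3cycles_onI)
  have through_c: "has_3cycle G c x y" if "x \<in> S" "y \<in> S" "x \<noteq> y" "x \<noteq> c" "y \<noteq> c" for x y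
  proof -
    consider "x = d" | "y = d" | "x \<noteq> d" "y \<noteq> d" using that(3) by blast
    then show ?thesis
    proof cases
      case 1 then show ?thesis using star[of y] that by simp
    next
      case 2 then show ?thesis using has_3cycle_perms[OF star[of x]] that by simp
    next
      case 3
      have "has_3cycle G d c x" "has_3cycle G d c y"
        using has_3cycle_perms[OF star[of x]] has_3cycle_perms[OF star[of y]] that 3 by auto
      then show ?thesis using has_3cycle_propagate[of d c x y] that by simp
    qed
  qed
  fix x y z assume xyz: "x \<in> S" "y \<in> S" "z \<in> S" "x \<noteq> y" "y \<noteq> z" "x \<noteq> z"
  consider "x = c" | "y = c" | "z = c" | "x \<noteq> c" "y \<noteq> c" "z \<noteq> c" by blast
  then show "has_3cycle G x y z"
  proof cases
    case 1 then show ?thesis using through_c xyz by auto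
  next
    case 2 then show ?thesis using has_3cycle_perms[OF through_c[of z x]] xyz by auto
  next
    case 3 then show ?thesis using has_3cycle_perms[OF through_c[of x y]] xyz by auto
  next
    case 4
    have "has_3cycle G c x y" "has_3cycle G c x z" using through_c xyz 4 by auto
    then show ?thesis using has_3cycle_propagate[of c x y z] xyz by simp
  qed
qed

lemma all_3cycles_on_union:
  assumes "all_3cycles_on G S" "all_3cycles_on G T" "finite S" "2 \<le> card (S \<inter> T)"
  shows "all_3cycles_on G (S \<union> T)"
proof -
  obtain c d where cd: "c \<in> S \<inter> T" "d \<in> S \<inter> T" "c \<noteq> d"
    using card_ge_2_obtain[of "S \<inter> T"] assms(3,4) by blast
  show ?thesis
    by (rule all_3cycles_on_from_pair[of c d])
      (use cd all_3cycles_onD[OF assms(1)] all_3cycles_onD[OF assms(2)] in auto)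
qed

text \<open>
  For a point w moved into N by g, the translate N' = g\<inverse> N contains w and
  meets N in at least two points.\<close>

lemma all_3cycles_on_spread:
  assumes N: "N \<subseteq> {1..n}" and allN: "all_3cycles_on G N"
    and card: "n + 2 \<le> 2 * card N" and into: "\<And>x. x \<in> {1..n} \<Longrightarrow> \<exists>g\<in>G. g x \<in> N"
  shows "all_3cycles_on G {1..n}"
proof -
  have finN: "finite N" using N finite_subset by blast
  have "card N \<le> n" using card_mono[OF _ N] by simp
  then have "2 \<le> card N" using card by linarith
  then obtain c d where cd: "c \<in> N" "d \<in> N" "c \<noteq> d" using card_ge_2_obtain[OF finN] by blast
  have "has_3cycle G c d w" if w: "w \<in> {1..n}" "w \<noteq> c" "w \<noteq> d" for w
  proof -
    obtain g where g: "g \<in> G" "g w \<in> N" using into[OF w(1)] by blast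
    have gp: "g permutes {1..n}" using mem_permutes[OF g(1)] .
    have h: "inv' g \<in> G" using inv_closed[OF g(1)] .
    define N' where "N' = inv' g ` N"
    have "inv' g (g w) = w" using permutes_inverses(2)[OF gp] .
    then have wN': "w \<in> N'" unfolding N'_def using g(2) by (metis image_eqI)
    have cN': "card N' = card N"
      unfolding N'_def using permutes_inj[OF mem_permutes[OF h]] by (simp add: card_image inj_on_subset)
    have N'_sub: "N' \<subseteq> {1..n}" unfolding N'_def using N permutes_image[OF mem_permutes[OF h]] by blast
    have "card (N \<union> N') \<le> n" using card_mono[of "{1..n}" "N \<union> N'"] N N'_sub by auto
    moreover have "card (N \<union> N') + card (N \<inter> N') = card N + card N'"
      using card_Un_Int[of N N'] finN N'_def by auto
    ultimately have "2 \<le> card (N \<inter> N')" using cN' card by linarith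
    then have "all_3cycles_on G (N \<union> N')"
      using all_3cycles_on_union[OF allN all_3cycles_on_image[OF allN h] finN] N'_def by simp
    then show ?thesis using all_3cycles_onD cd wN' w by blast
  qed
  then show ?thesis by (intro all_3cycles_on_from_pair[OF cd(3)]) (use cd N in auto)
qed

text \<open>All 3-cycles generate the alternating group; together with one odd permutation, all of S_n.\<close>

lemma alt_group_subset:
  assumes all: "all_3cycles_on G {1..n}"
  shows "carrier (alt_group n) \<subseteq> G"
proof -
  have three_cycle: "h \<in> G" if h: "h \<in> three_cycles n" for h
  proof -
    obtain cs where cs: "h = cycle_of_list cs" "distinct cs" "length cs = 3" "set cs \<subseteq> {1..n}"
      using h by blast
    obtain a b c where abc: "cs = [a, b, c]" using stupid_lemma[OF cs(3)] by blast
    have "has_3cycle G a b c" using all_3cycles_onD[OF all, of a b c] cs(2,4) abc by auto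
    then show ?thesis using cs(1) abc by (simp add: has_3cycle_def)
  qed
  have "h \<in> G" if "h \<in> generate (alt_group n) (three_cycles n)" for h
    using that
  proof (induction h rule: generate.induct)
    case one then show ?case using id_closed by (simp add: alt_group_one id_def)
  next
    case (incl h) then show ?case by (rule three_cycle)
  next
    case (inv h)
    have "h \<in> carrier (alt_group n)" using inv three_cycles_incl by blast
    then have "inv\<^bsub>alt_group n\<^esub> h = inv' h" by (rule alt_group_inv_equality)
    then show ?case using inv_closed[OF three_cycle[OF inv]] by simp
  next
    case (eng h1 h2) then show ?case using comp_closed[of h1 h2] by (simp only: alt_group_mult)
  qed
  then show ?thesis using alt_group_carrier_as_three_cycles by blast
qed

lemma eq_sym_group:
  assumes all: "all_3cycles_on G {1..n}" and odd: "g \<in> G" "\<not> evenperm g"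
  shows "G = carrier (sym_group n)"
proof
  show "G \<subseteq> carrier (sym_group n)" using subgroup.subset[OF subgroup] .
  have A: "carrier (alt_group n) \<subseteq> G" by (rule alt_group_subset[OF all])
  show "carrier (sym_group n) \<subseteq> G"
  proof
    fix q assume "q \<in> carrier (sym_group n)"
    then have qp: "q permutes {1..n}" by (simp add: sym_group_carrier)
    have gp: "g permutes {1..n}" using mem_permutes[OF odd(1)] .
    show "q \<in> G"
    proof (cases "evenperm q")
      case True then show ?thesis using A qp by (auto simp: alt_group_carrier)
    next
      case False
      have perm: "permutation q" "permutation g" "permutation (inv' g)"
        using qp gp by (auto simp: permutation_permutes intro: permutes_inv)
      have "evenperm (inv' g \<circ> q)"
        using evenperm_comp[OF perm(3,1)] evenperm_inv[OF perm(2)] odd(2) False by simp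
      moreover have "inv' g \<circ> q permutes {1..n}" using qp gp by (simp add: permutes_compose permutes_inv)
      ultimately have "inv' g \<circ> q \<in> G" using A by (auto simp: alt_group_carrier)
      then have "g \<circ> (inv' g \<circ> q) \<in> G" using comp_closed[OF odd(1)] by blast
      moreover have "g \<circ> (inv' g \<circ> q) = q" using permutes_inv_o(1)[OF gp] by (simp add: o_assoc)
      ultimately show ?thesis by simp
    qed
  qed
qed

lemma has_3cycle_quotient:
  assumes u: "u \<in> G" and v: "v \<in> G" and distinct: "x \<noteq> y" "y \<noteq> z" "x \<noteq> z"
    and factor: "\<And>w. cycle_of_list [x, y, z] (v w) = u w"
  shows "has_3cycle G x y z"
proof -
  have vp: "v permutes {1..n}" using mem_permutes[OF v] .
  have "cycle_of_list [x, y, z] = u \<circ> inv' v"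
    using factor permutes_inverses(1)[OF vp] by (metis comp_apply ext)
  then show ?thesis using comp_closed[OF u inv_closed[OF v]] distinct by (simp add: has_3cycle_def)
qed

lemma all_3cycles_on_rotation:
  fixes P :: "nat \<Rightarrow> nat"
  assumes p: "3 \<le> p" and injP: "inj_on P {..<p}" and n0: "n0 \<notin> P ` {..<p}"
    and u: "u \<in> G" "\<And>j. j < p \<Longrightarrow> u (P j) = P (Suc j mod p)" "u n0 = n0"
    and base: "has_3cycle G (P 0) n0 (P (p - 1))"
  shows "all_3cycles_on G (insert n0 (P ` {..<p}))"
proof -
  have upow: "(u ^^ j) (P i) = P ((i + j) mod p)" if "i < p" for i j
  proof (induction j)
    case 0 then show ?case using that by simp
  next
    case (Suc j)
    have "(u ^^ Suc j) (P i) = P (Suc ((i + j) mod p) mod p)" using Suc u(2) p by simp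
    then show ?case by (simp add: mod_Suc_eq)
  qed
  have upow_n0: "(u ^^ j) n0 = n0" for j by (induction j) (auto simp: u(3))
  have step: "has_3cycle G n0 (P i) (P (Suc i))" if "Suc i < p" for i
  proof -
    have "p - 1 + Suc i = i + p" using p by simp
    then have "(p - 1 + Suc i) mod p = i" using that by simp
    then have moves: "(u ^^ Suc i) (P 0) = P (Suc i)" "(u ^^ Suc i) (P (p - 1)) = P i"
      using upow[of 0 "Suc i"] upow[of "p - 1" "Suc i"] that p by simp_all
    have "has_3cycle G ((u ^^ Suc i) (P 0)) ((u ^^ Suc i) n0) ((u ^^ Suc i) (P (p - 1)))"
      by (rule has_3cycle_conj[OF base funpow_closed[OF u(1)]])
    then have "has_3cycle G (P (Suc i)) n0 (P i)" unfolding moves upow_n0 .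
    then show ?thesis using has_3cycle_perms by blast
  qed
  have from_P0: "has_3cycle G n0 (P 0) (P (Suc i))" if "Suc i < p" for i
    using that
  proof (induction i)
    case 0 then show ?case using step[of 0] by simp
  next
    case (Suc i)
    have "has_3cycle G n0 (P 0) (P (Suc i))" using Suc by simp
    then have a: "has_3cycle G (P (Suc i)) n0 (P 0)" using has_3cycle_perms by blast
    have b: "has_3cycle G (P (Suc i)) n0 (P (Suc (Suc i)))" using step[of "Suc i"] Suc.prems has_3cycle_perms by blast
    have "P 0 \<noteq> P (Suc (Suc i))" using inj_onD[OF injP, of 0 "Suc (Suc i)"] Suc.prems by auto
    then show ?case by (rule has_3cycle_propagate[OF a b])
  qed
  show ?thesis
  proof (rule all_3cycles_on_from_pair[of n0 "P 0"])
    fix w assume w: "w \<in> insert n0 (P ` {..<p})" "w \<noteq> n0" "w \<noteq> P 0"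
    then obtain j where j: "j < p" "w = P j" by blast
    with w(3) have "j \<noteq> 0" by metis
    then obtain i where "j = Suc i" using not0_implies_Suc by blast
    then show "has_3cycle G n0 (P 0) w" using from_P0 j by simp
  qed (use n0 p in auto)
qed

text \<open>
  The generation step used for the letters a, b: u rotates the p points P j, and v is the
  p-cycle (n0, P 0, ..., P (p-2)) fixing P (p-1); both are trivial elsewhere.  Then
  u = (P 0, n0, P (p-1)) \<circ> v, so G contains all 3-cycles on {n0} \<union> P ` {..<p}.\<close>

lemma all_3cycles_on_two_cycles:
  fixes P :: "nat \<Rightarrow> nat"
  assumes p: "3 \<le> p" and injP: "inj_on P {..<p}" and n0: "n0 \<notin> P ` {..<p}"
    and u: "u \<in> G" "\<And>j. j < p \<Longrightarrow> u (P j) = P (Suc j mod p)" "u n0 = n0"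
    and v: "v \<in> G" "v n0 = P 0" "\<And>j. Suc (Suc j) < p \<Longrightarrow> v (P j) = P (Suc j)" "v (P (p - 2)) = n0"
       "v (P (p - 1)) = P (p - 1)"
    and outside: "\<And>x. x \<notin> insert n0 (P ` {..<p}) \<Longrightarrow> u x = x \<and> v x = x"
  shows "all_3cycles_on G (insert n0 (P ` {..<p}))"
proof -
  have Pne: "P i \<noteq> P j" if "i < p" "j < p" "i \<noteq> j" for i j
    using injP that by (auto dest: inj_onD)
  have Pn0: "P i \<noteq> n0" if "i < p" for i using n0 that by auto
  have dc: "P 0 \<noteq> n0" "n0 \<noteq> P (p - 1)" "P 0 \<noteq> P (p - 1)"
    using Pne[of 0 "p - 1"] Pn0[of 0] Pn0[of "p - 1"] p by auto
  note c = cycle3_apply[OF dc]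
  have "cycle_of_list [P 0, n0, P (p - 1)] (v w) = u w" for w
  proof (cases "w \<in> insert n0 (P ` {..<p})")
    case False then show ?thesis using outside[OF False] c dc by auto
  next
    case True
    then consider "w = n0" | j where "j < p" "w = P j" by blast
    then show ?thesis
    proof cases
      case 1 then show ?thesis using c u v by simp
    next
      case (2 j)
      consider "Suc (Suc j) < p" | "j = p - 2" | "j = p - 1" using 2(1) p by linarith
      then show ?thesis
      proof cases
        case 1
        then have "P (Suc j) \<noteq> P 0" "P (Suc j) \<noteq> P (p - 1)" "P (Suc j) \<noteq> n0" using Pne Pn0 by auto
        then show ?thesis using 1 2 c u(2) v(3) by simp
      next
        case last2: 2
        then have "Suc j = p - 1" using p by simp
        then show ?thesis using last2 2 c u(2) v(4) dc by simp
      next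
        case 3
        then have "Suc j mod p = 0" using p by (simp add: Suc_diff_Suc)
        then show ?thesis using 3 2 c u(2) v(5) dc by simp
      qed
    qed
  qed
  then have base: "has_3cycle G (P 0) n0 (P (p - 1))" using has_3cycle_quotient[OF u(1) v(1) dc] by blast
  show ?thesis using all_3cycles_on_rotation[OF p injP n0 u base] .
qed

end

lemma extend_partial_injection:
  assumes A: "finite A" and D: "D \<subseteq> A" and inj: "inj_on \<pi> D" and im: "\<pi> ` D \<subseteq> A"
  shows "\<exists>\<sigma>. \<sigma> permutes A \<and> (\<forall>x\<in>D. \<sigma> x = \<pi> x)"
proof -
  have fD: "finite D" using finite_subset[OF D A] .
  have "card (A - D) = card (A - \<pi> ` D)"
    by (simp only: card_Diff_subset[OF fD D] card_Diff_subset[OF finite_imageI[OF fD] im] card_image[OF inj])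
  then obtain \<beta> where \<beta>: "bij_betw \<beta> (A - D) (A - \<pi> ` D)"
    using finite_same_card_bij[OF finite_Diff[OF A] finite_Diff[OF A]] by blast
  define \<sigma> where "\<sigma> x = (if x \<in> D then \<pi> x else if x \<in> A then \<beta> x else x)" for x
  have "bij_betw \<sigma> D (\<pi> ` D)"
    using inj_on_imp_bij_betw[OF inj] bij_betw_cong[of D \<sigma> \<pi>] by (simp add: \<sigma>_def)
  moreover have "bij_betw \<sigma> (A - D) (A - \<pi> ` D)"
    using \<beta> bij_betw_cong[of "A - D" \<sigma> \<beta>] by (simp add: \<sigma>_def)
  ultimately have "bij_betw \<sigma> (D \<union> (A - D)) (\<pi> ` D \<union> (A - \<pi> ` D))"
    by (rule bij_betw_combine) blast
  moreover have "D \<union> (A - D) = A" "\<pi> ` D \<union> (A - \<pi> ` D) = A" using D im by blast+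
  ultimately have "bij_betw \<sigma> A A" by simp
  moreover have "\<And>x. x \<notin> A \<Longrightarrow> \<sigma> x = x" using D by (auto simp: \<sigma>_def)
  ultimately have "\<sigma> permutes A" by (rule bij_imp_permutes)
  then show ?thesis by (auto simp: \<sigma>_def)
qed

lemma permutes_superset_closed: "\<sigma> permutes S \<Longrightarrow> S \<subseteq> A \<Longrightarrow> x \<in> A \<Longrightarrow> \<sigma> x \<in> A"
  by (metis permutes_in_image permutes_not_in subsetD)

lemma funpow_fixpoint: "\<sigma> x = x \<Longrightarrow> (\<sigma> ^^ n) x = x"
  by (induction n) auto

lemma funpow_agree:
  assumes "\<And>x. x \<in> C \<Longrightarrow> \<sigma> x = \<tau> x" "\<tau> ` C \<subseteq> C" "x \<in> C"
  shows "(\<sigma> ^^ n) x = (\<tau> ^^ n) x \<and> (\<tau> ^^ n) x \<in> C"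
proof (induction n)
  case 0 then show ?case using assms(3) by simp
next
  case (Suc n)
  then have "\<sigma> ((\<tau> ^^ n) x) = \<tau> ((\<tau> ^^ n) x)" using assms(1) by blast
  then show ?case using Suc assms(2) by auto
qed

text \<open>
  A point in a finite invariant set A of a permutation returns to itself after some
  d \<le> card A steps (pigeonhole on the first card A + 1 iterates).\<close>

lemma permutes_orbit_returns:
  assumes S: "\<sigma> permutes S" and A: "finite A" "\<sigma> ` A \<subseteq> A" and x: "x \<in> A"
  obtains d where "0 < d" "d \<le> card A" "(\<sigma> ^^ d) x = x"
proof -
  have inA: "(\<sigma> ^^ i) x \<in> A" for i
    by (induction i) (use x A(2) in \<open>auto simp: image_subset_iff\<close>)
  have "\<not> inj_on (\<lambda>i. (\<sigma> ^^ i) x) {0..card A}"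
  proof
    assume "inj_on (\<lambda>i. (\<sigma> ^^ i) x) {0..card A}"
    then have "card ((\<lambda>i. (\<sigma> ^^ i) x) ` {0..card A}) = Suc (card A)" by (simp add: card_image)
    moreover have "(\<lambda>i. (\<sigma> ^^ i) x) ` {0..card A} \<subseteq> A" using inA by auto
    moreover note card_mono[OF A(1) calculation(2)]
    ultimately show False by linarith
  qed
  then obtain i j where ij: "i \<le> card A" "j \<le> card A" "i < j" "(\<sigma> ^^ i) x = (\<sigma> ^^ j) x"
    unfolding inj_on_def by (metis atLeastAtMost_iff linorder_neqE_nat zero_le)
  have "(\<sigma> ^^ j) x = (\<sigma> ^^ i) ((\<sigma> ^^ (j - i)) x)"
    using ij(3) by (metis funpow_add le_add_diff_inverse less_imp_le o_apply)
  then have "(\<sigma> ^^ (j - i)) x = x"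
    using ij(4) permutes_inj[OF permutes_funpow[OF S]] by (metis injD)
  then show ?thesis using that[of "j - i"] ij by auto
qed

lemma funpow_fact_fixes:
  assumes S: "\<sigma> permutes S" and A: "finite A" "\<sigma> ` A \<subseteq> A" "card A \<le> M" and x: "x \<in> A"
  shows "(\<sigma> ^^ (fact M * t)) x = x"
proof -
  obtain d where d: "0 < d" "d \<le> card A" "(\<sigma> ^^ d) x = x"
    using permutes_orbit_returns[OF S A(1,2) x] .
  have "d dvd fact M" using d A(3) by (intro dvd_fact) auto
  then obtain q where q: "fact M * t = d * (q * t)" by (metis dvd_def mult.assoc)
  have "((\<sigma> ^^ d) ^^ r) x = x" for r using d(3) by (induction r) auto
  then show ?thesis unfolding q by (simp add: funpow_mult)
qed

lemma cycle_funpow_nth: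
  assumes "distinct cs" "j < length cs"
  shows "(cycle_of_list cs ^^ n) (cs ! j) = cs ! ((n + j) mod length cs)"
proof -
  have "map (cycle_of_list cs ^^ n) cs = rotate n cs" by (rule cyclic_rotation[OF assms(1)])
  then have "(cycle_of_list cs ^^ n) (cs ! j) = rotate n cs ! j" using assms(2) by (metis nth_map)
  then show ?thesis using assms(2) by (simp add: nth_rotate)
qed

section \<open>The finite set of cosets visited by the relevant words\<close>

locale schreier_setup = group F for F :: "('a, 'b) monoid_scheme" (structure) +
  fixes B :: "'a set" and S :: "'a set" and H :: "'a set" and \<Gamma> :: "'a set"
  assumes fb: "free_basis F B" and two: "\<exists>a b. a \<in> B \<and> b \<in> B \<and> a \<noteq> b"
    and Hdef: "H = generate F S" and Hsub: "subgroup H F" and Sfin: "finite S" and Ssub: "S \<subseteq> carrier F"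
    and inf: "infinite (rcosets H)" and Gfin: "finite \<Gamma>" and Gsub: "\<Gamma> \<subseteq> carrier F - H"
begin

lemma B_carrier: "B \<subseteq> carrier F" using fb by (simp add: free_basis_def)

lemma H_carrier: "H \<subseteq> carrier F" using Hsub subgroup.subset by blast

lemma word_carrier: "set (map fst w) \<subseteq> B \<Longrightarrow> word_eval F w \<in> carrier F"
  using word_eval_closed B_carrier by blast

definition act :: "'a \<Rightarrow> 'a set \<Rightarrow> 'a set" where
  "act g C = C #> inv g"

lemma act_coset: "y \<in> carrier F \<Longrightarrow> x \<in> carrier F \<Longrightarrow> act x (H #> y) = H #> (y \<otimes> inv x)"
  unfolding act_def using coset_mult_assoc[OF H_carrier] by simp

lemma act_H: "x \<in> carrier F \<Longrightarrow> act x H = H #> inv x"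
  unfolding act_def ..

lemma H_rcoset: "H \<in> rcosets H"
  using rcosets_part_G[OF Hsub] subgroup.one_closed[OF Hsub] coset_join2[OF one_closed Hsub]
  by (metis coset_mult_one[OF H_carrier] rcosetsI[OF H_carrier one_closed])

lemma act_rcosets: "C \<in> rcosets H \<Longrightarrow> x \<in> carrier F \<Longrightarrow> act x C \<in> rcosets H"
  using act_coset H_carrier by (auto simp: RCOSETS_def intro!: rcosetsI)

lemma act_mult:
  assumes "C \<in> rcosets H" "x1 \<in> carrier F" "x2 \<in> carrier F"
  shows "act x1 (act x2 C) = act (x1 \<otimes> x2) C"
proof -
  obtain y where y: "y \<in> carrier F" "C = H #> y" using assms(1) by (auto simp: RCOSETS_def)
  have "act x1 (act x2 C) = H #> (y \<otimes> inv x2 \<otimes> inv x1)"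
    using act_coset y assms(2,3) by simp
  also have "\<dots> = H #> (y \<otimes> inv (x1 \<otimes> x2))"
    using y assms(2,3) by (simp add: inv_mult_group m_assoc)
  also have "\<dots> = act (x1 \<otimes> x2) C" using act_coset y assms(2,3) by simp
  finally show ?thesis .
qed

lemma act_one: "C \<in> rcosets H \<Longrightarrow> act \<one> C = C"
  using act_coset H_carrier by (auto simp: RCOSETS_def)

lemma act_inv_act: "C \<in> rcosets H \<Longrightarrow> x \<in> carrier F \<Longrightarrow> act (inv x) (act x C) = C"
  by (simp add: act_mult act_one)

lemma act_act_inv: "C \<in> rcosets H \<Longrightarrow> x \<in> carrier F \<Longrightarrow> act x (act (inv x) C) = C"
  by (simp add: act_mult act_one)

definition word_of :: "'a \<Rightarrow> ('a \<times> bool) list" where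
  "word_of g = (SOME w. set (map fst w) \<subseteq> B \<and> word_eval F w = g)"

lemma word_of: "g \<in> carrier F \<Longrightarrow> set (map fst (word_of g)) \<subseteq> B \<and> word_eval F (word_of g) = g"
  unfolding word_of_def using free_basis_word_exists[OF is_group fb] by (rule someI_ex)

definition W :: "('a \<times> bool) list set" where
  "W = word_of ` (S \<union> \<Gamma>)"

definition V :: "'a set set" where
  "V = insert H {act (word_eval F (drop i w)) H | w i. w \<in> W \<and> i \<le> length w}"

lemma W_letters: "w \<in> W \<Longrightarrow> set (map fst w) \<subseteq> B"
  unfolding W_def using word_of Ssub Gsub by blast

lemma suffix_carrier: "w \<in> W \<Longrightarrow> word_eval F (drop i w) \<in> carrier F"
  using W_letters[of w] by (intro word_carrier) (auto dest: in_set_dropD)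

lemma H_V: "H \<in> V" unfolding V_def by simp

lemma suffix_V: "w \<in> W \<Longrightarrow> i \<le> length w \<Longrightarrow> act (word_eval F (drop i w)) H \<in> V"
  unfolding V_def by blast

lemma V_fin: "finite V"
proof -
  have "{act (word_eval F (drop i w)) H | w i. w \<in> W \<and> i \<le> length w}
        \<subseteq> (\<lambda>(w, i). act (word_eval F (drop i w)) H) ` (SIGMA w:W. {..length w})" by auto
  moreover have "finite (SIGMA w:W. {..length w})" unfolding W_def using Sfin Gfin by auto
  ultimately show ?thesis unfolding V_def by (meson finite_imageI finite_insert finite_subset)
qed

lemma V_rcosets: "C \<in> V \<Longrightarrow> C \<in> rcosets H"
  unfolding V_def using H_rcoset act_rcosets[OF H_rcoset suffix_carrier] by blast

text \<open>
  If every basis letter mapped V into V, then (V being finite and act c injective) so would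
  every inverse letter, hence every element of F, and V would contain all cosets of H.\<close>

lemma letters_closed_imp_all_closed:
  assumes closed: "\<And>c C. c \<in> B \<Longrightarrow> C \<in> V \<Longrightarrow> act c C \<in> V"
  shows "g \<in> generate F B \<Longrightarrow> C \<in> V \<Longrightarrow> act g C \<in> V"
proof (induction g arbitrary: C rule: generate.induct)
  case one then show ?case using act_one V_rcosets by simp
next
  case (incl h) then show ?case using closed by blast
next
  case (inv c)
  have cF: "c \<in> carrier F" using inv B_carrier by blast
  have "inj_on (act c) V"
    by (rule inj_on_inverseI[of _ "act (inv c)"]) (rule act_inv_act[OF V_rcosets cF])
  moreover have "act c ` V \<subseteq> V" using closed inv by blast
  ultimately have "act c ` V = V" using V_fin by (simp add: endo_inj_surj)
  then obtain C' where "C' \<in> V" "C = act c C'" using inv by blast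
  then show ?case using act_inv_act[OF V_rcosets cF] by simp
next
  case (eng h1 h2)
  have "h1 \<in> carrier F" "h2 \<in> carrier F" using eng.hyps fb by (auto simp: free_basis_def)
  then show ?case using eng act_mult[OF V_rcosets] by metis
qed

text \<open>Since H has infinite index, some letter a moves some coset C \<in> V out of V.\<close>

lemma open_letter: "\<exists>a\<in>B. \<exists>C\<in>V. act a C \<notin> V"
proof (rule ccontr)
  assume "\<not> ?thesis"
  then have closed: "g \<in> generate F B \<Longrightarrow> C \<in> V \<Longrightarrow> act g C \<in> V" for g C
    using letters_closed_imp_all_closed by blast
  have "rcosets H \<subseteq> V"
  proof
    fix Z assume "Z \<in> rcosets H"
    then obtain x where x: "x \<in> carrier F" "Z = H #> x" unfolding RCOSETS_def by blast
    have "inv x \<in> generate F B" using x(1) fb by (simp add: free_basis_def)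
    moreover have "act (inv x) H = Z" using act_H x by simp
    ultimately show "Z \<in> V" using closed H_V by metis
  qed
  then show False using inf V_fin finite_subset by blast
qed

end

context schreier_setup begin

definition m :: nat where "m = card V"
definition label :: "'a set \<Rightarrow> nat" where "label = (SOME label. bij_betw label V {1..m})"
definition unlabel :: "nat \<Rightarrow> 'a set" where "unlabel = inv_into V label"

lemma label_exists: "\<exists>label. bij_betw label V {1..m}"
proof -
  obtain h where h: "bij_betw h V {0..<m}" using ex_bij_betw_finite_nat[OF V_fin] unfolding m_def by blast
  have "bij_betw Suc {0..<m} {1..m}"
    by (simp add: bij_betw_def image_Suc_atLeastLessThan atLeastLessThanSuc_atLeastAtMost)
  then show ?thesis using bij_betw_trans[OF h] by blast
qed

lemma label_bij: "bij_betw label V {1..m}"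
  unfolding label_def using label_exists by (rule someI_ex)

lemma label_in: "C \<in> V \<Longrightarrow> label C \<in> {1..m}" using label_bij bij_betwE by blast
lemma label_inj: "C \<in> V \<Longrightarrow> C' \<in> V \<Longrightarrow> label C = label C' \<Longrightarrow> C = C'"
  using label_bij by (auto simp: bij_betw_def dest: inj_onD)
lemma unlabel_label: "C \<in> V \<Longrightarrow> unlabel (label C) = C"
  unfolding unlabel_def using label_bij by (simp add: bij_betw_def)
lemma label_surj: "x \<in> {1..m} \<Longrightarrow> \<exists>C\<in>V. x = label C"
  using label_bij by (auto simp: bij_betw_def)

definition dom_letter :: "'a \<Rightarrow> nat set" where "dom_letter c = {label C | C. C \<in> V \<and> act c C \<in> V}"
definition move_letter :: "'a \<Rightarrow> nat \<Rightarrow> nat" where "move_letter c x = label (act c (unlabel x))"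

lemma dom_letter_sub: "dom_letter c \<subseteq> {1..m}" unfolding dom_letter_def using label_in by blast

lemma move_letter_inj: "c \<in> B \<Longrightarrow> inj_on (move_letter c) (dom_letter c)"
proof (rule inj_onI)
  fix x y assume c: "c \<in> B" and xy: "x \<in> dom_letter c" "y \<in> dom_letter c" "move_letter c x = move_letter c y"
  obtain C where C: "C \<in> V" "act c C \<in> V" "x = label C" using xy(1) unfolding dom_letter_def by blast
  obtain D where D: "D \<in> V" "act c D \<in> V" "y = label D" using xy(2) unfolding dom_letter_def by blast
  have "label (act c C) = label (act c D)" using xy(3) C D by (simp add: move_letter_def unlabel_label)
  then have "act c C = act c D" using label_inj C D by blast
  moreover have cF: "c \<in> carrier F" using c B_carrier by blast
  ultimately have "C = D" using act_inv_act[OF V_rcosets[OF C(1)] cF] act_inv_act[OF V_rcosets[OF D(1)] cF] by metis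
  then show "x = y" using C D by simp
qed

lemma move_letter_image: "move_letter c ` dom_letter c \<subseteq> {1..m}"
proof
  fix y assume "y \<in> move_letter c ` dom_letter c"
  then obtain C where "C \<in> V" "act c C \<in> V" "y = move_letter c (label C)" unfolding dom_letter_def by blast
  then show "y \<in> {1..m}" unfolding move_letter_def using unlabel_label label_in by simp
qed

definition ext_letter :: "'a \<Rightarrow> nat \<Rightarrow> nat" where
  "ext_letter c = (SOME \<sigma>. \<sigma> permutes {1..m} \<and> (\<forall>x\<in>dom_letter c. \<sigma> x = move_letter c x))"

lemma ext_letter:
  assumes "c \<in> B"
  shows "ext_letter c permutes {1..m} \<and> (\<forall>x\<in>dom_letter c. ext_letter c x = move_letter c x)"
proof -
  have "\<exists>\<sigma>. \<sigma> permutes {1..m} \<and> (\<forall>x\<in>dom_letter c. \<sigma> x = move_letter c x)"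
    by (rule extend_partial_injection[OF finite_atLeastAtMost dom_letter_sub move_letter_inj[OF assms] move_letter_image])
  then show ?thesis unfolding ext_letter_def by (rule someI_ex)
qed

definition a0 :: 'a where "a0 = (SOME a. a \<in> B \<and> (\<exists>C\<in>V. act a C \<notin> V))"
definition C0 :: "'a set" where "C0 = (SOME C. C \<in> V \<and> act a0 C \<notin> V)"
definition x0 :: nat where "x0 = label C0"

lemma a0: "a0 \<in> B" "C0 \<in> V" "act a0 C0 \<notin> V"
proof -
  have "\<exists>a. a \<in> B \<and> (\<exists>C\<in>V. act a C \<notin> V)" using open_letter by blast
  then have "a0 \<in> B \<and> (\<exists>C\<in>V. act a0 C \<notin> V)" unfolding a0_def by (rule someI_ex)
  moreover then have "C0 \<in> V \<and> act a0 C0 \<notin> V" unfolding C0_def by (metis (mono_tags, lifting) someI_ex)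
  ultimately show "a0 \<in> B" "C0 \<in> V" "act a0 C0 \<notin> V" by auto
qed

lemma x0: "x0 \<in> {1..m}" "x0 \<notin> dom_letter a0"
proof -
  show "x0 \<in> {1..m}" unfolding x0_def using label_in a0 by blast
  show "x0 \<notin> dom_letter a0"
  proof
    assume "x0 \<in> dom_letter a0"
    then obtain C where C: "C \<in> V" "act a0 C \<in> V" "x0 = label C" unfolding dom_letter_def by blast
    have "C = C0" using label_inj[OF C(1) a0(2)] C(3) x0_def by simp
    then show False using C(2) a0(3) by simp
  qed
qed

definition b0 :: 'a where "b0 = (SOME b. b \<in> B \<and> b \<noteq> a0)"

lemma b0: "b0 \<in> B" "b0 \<noteq> a0"
proof -
  have "\<exists>b. b \<in> B \<and> b \<noteq> a0" using two by blast
  then have "b0 \<in> B \<and> b0 \<noteq> a0" unfolding b0_def by (rule someI_ex)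
  then show "b0 \<in> B" "b0 \<noteq> a0" by auto
qed

end

section \<open>The permutations assigned to the letters\<close>

text \<open>
  The symmetric group acts on {1..kk}, kk = m + p + 3, where {1..m} are the points of V,
  n0 = m + 1, P j = m + 2 + j (j < p) and d1, d2 are the two last points.  With
  p = (m + 3)! + 1:
  - a0 acts as its extended partial permutation, composed with the 4-cycle
    (x0 n0 d1 d2) -- allowed because x0 has no prescribed image -- and with the
    p-cycle zeta = (P 0 ... P (p-1));
  - b0 acts as its extended partial permutation composed with the p-cycle
    xi = (n0 P 0 ... P (p-2)), and with the transposition (d1 d2) if needed to be odd;
  - every other letter acts as its extended partial permutation.
  All new points lie outside {1..m}, so the letters still realise the partial action on V.\<close>

context schreier_setup begin

definition K :: nat where "K = fact (m + 3)"
definition p :: nat where "p = K + 1"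
definition n0 :: nat where "n0 = m + 1"
definition P :: "nat \<Rightarrow> nat" where "P j = m + 2 + j"
definition d1 :: nat where "d1 = m + p + 2"
definition d2 :: nat where "d2 = m + p + 3"
definition kk :: nat where "kk = m + p + 3"
definition Ps :: "nat list" where "Ps = map P [0..<p]"
definition Qs :: "nat list" where "Qs = n0 # map P [0..<p - 1]"
definition zeta :: "nat \<Rightarrow> nat" where "zeta = cycle_of_list Ps"
definition xi :: "nat \<Rightarrow> nat" where "xi = cycle_of_list Qs"
definition exit_cycle :: "nat \<Rightarrow> nat" where "exit_cycle = cycle_of_list [x0, n0, d1, d2]"
definition perm_a :: "nat \<Rightarrow> nat" where "perm_a = ext_letter a0 \<circ> exit_cycle \<circ> zeta"
definition perm_b_raw :: "nat \<Rightarrow> nat" where "perm_b_raw = ext_letter b0 \<circ> xi"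
definition perm_b :: "nat \<Rightarrow> nat" where
  "perm_b = (if evenperm perm_b_raw then perm_b_raw \<circ> transpose d1 d2 else perm_b_raw)"
definition sigma :: "'a \<Rightarrow> nat \<Rightarrow> nat" where
  "sigma c = (if c = a0 then perm_a else if c = b0 then perm_b else ext_letter c)"

lemma K_ge: "m + 3 \<le> K" "1 \<le> K"
proof -
  show "m + 3 \<le> K" unfolding K_def by (rule fact_ge_self)
  then show "1 \<le> K" by linarith
qed
lemma p_ge: "m + 4 \<le> p" "3 \<le> p" using K_ge unfolding p_def by auto

lemma set_Ps: "set Ps = P ` {..<p}" unfolding Ps_def by auto
lemma set_Qs: "set Qs = insert n0 (P ` {..<p - 1})" unfolding Qs_def by auto
lemma len_Ps: "length Ps = p" unfolding Ps_def by simp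
lemma len_Qs: "length Qs = p" unfolding Qs_def using p_ge by simp
lemma Ps_nth: "j < p \<Longrightarrow> Ps ! j = P j" unfolding Ps_def by simp
lemma Qs_nth0: "Qs ! 0 = n0" unfolding Qs_def by simp
lemma Qs_nth: "j < p - 1 \<Longrightarrow> Qs ! Suc j = P j" unfolding Qs_def by simp
lemma dist_Ps: "distinct Ps" unfolding Ps_def by (simp add: distinct_map inj_on_def P_def)

lemma inj_P: "inj P" unfolding P_def by (rule injI) simp
lemma dist_Qs: "distinct Qs"
proof -
  have "distinct (map P [0..<p - 1])" by (simp add: distinct_map inj_on_subset[OF inj_P])
  moreover have "n0 \<notin> set (map P [0..<p - 1])" by (auto simp: P_def n0_def)
  ultimately show ?thesis unfolding Qs_def by simp
qed

lemma ext_letter_out: "c \<in> B \<Longrightarrow> x \<notin> {1..m} \<Longrightarrow> ext_letter c x = x"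
  using ext_letter[THEN conjunct1] by (rule permutes_not_in)

lemma ext_letter_permutes: "c \<in> B \<Longrightarrow> ext_letter c permutes {1..kk}"
  using ext_letter by (rule permutes_subset[OF conjunct1]) (auto simp: kk_def)

lemma zeta_permutes: "zeta permutes {1..kk}"
  unfolding zeta_def by (rule permutes_subset[OF cycle_permutes]) (auto simp: set_Ps P_def kk_def)

lemma xi_permutes: "xi permutes {1..kk}"
  unfolding xi_def by (rule permutes_subset[OF cycle_permutes])
    (use p_ge in \<open>auto simp: set_Qs P_def kk_def n0_def\<close>)

lemma exit_cycle_permutes: "exit_cycle permutes {1..kk}"
  unfolding exit_cycle_def by (rule permutes_subset[OF cycle_permutes])
    (use x0(1) in \<open>auto simp: kk_def n0_def d1_def d2_def\<close>)

lemma swap_permutes: "transpose d1 d2 permutes {1..kk}"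
  by (rule permutes_swap_id) (auto simp: kk_def d1_def d2_def)

lemma perm_a_permutes: "perm_a permutes {1..kk}"
  unfolding perm_a_def using ext_letter_permutes[OF a0(1)] exit_cycle_permutes zeta_permutes
  by (simp add: permutes_compose)

lemma perm_b_raw_permutes: "perm_b_raw permutes {1..kk}"
  unfolding perm_b_raw_def using ext_letter_permutes[OF b0(1)] xi_permutes by (simp add: permutes_compose)

lemma perm_b_permutes: "perm_b permutes {1..kk}"
  unfolding perm_b_def using perm_b_raw_permutes swap_permutes by (simp add: permutes_compose)

lemma sigma_permutes: "c \<in> B \<Longrightarrow> sigma c permutes {1..kk}"
  unfolding sigma_def using perm_a_permutes perm_b_permutes ext_letter_permutes by simp

lemma perm_b_odd: "\<not> evenperm perm_b"
proof -
  have p1: "permutation perm_b_raw" using perm_b_raw_permutes permutation_permutes by blast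
  have p2: "permutation (transpose d1 d2)" using swap_permutes permutation_permutes by blast
  have "d1 \<noteq> d2" by (simp add: d1_def d2_def)
  then have "\<not> evenperm (transpose d1 d2)" by (simp add: evenperm_swap)
  then show ?thesis unfolding perm_b_def using evenperm_comp[OF p1 p2] by auto
qed

lemma sigma_agree:
  assumes c: "c \<in> B" and x: "x \<in> dom_letter c" shows "sigma c x = move_letter c x"
proof -
  have xm: "x \<in> {1..m}" using x dom_letter_sub by blast
  have z: "zeta x = x" unfolding zeta_def by (rule id_outside_supp) (use xm in \<open>auto simp: set_Ps P_def\<close>)
  have xi: "xi x = x" unfolding xi_def by (rule id_outside_supp) (use xm in \<open>auto simp: set_Qs P_def n0_def\<close>)
  have t: "transpose d1 d2 x = x" using xm by (auto simp: d1_def d2_def)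
  show ?thesis
  proof (cases "c = a0")
    case True
    have "x \<noteq> x0" using x x0(2) True by blast
    then have "exit_cycle x = x" unfolding exit_cycle_def
      by (intro id_outside_supp) (use xm in \<open>auto simp: n0_def d1_def d2_def\<close>)
    then show ?thesis using True z ext_letter[OF c] x by (simp add: sigma_def perm_a_def)
  next
    case False
    show ?thesis
    proof (cases "c = b0")
      case True
      then show ?thesis using False xi t ext_letter[OF c] x by (simp add: sigma_def perm_b_def perm_b_raw_def)
    next
      case False': False
      then show ?thesis using False ext_letter[OF c] x by (simp add: sigma_def)
    qed
  qed
qed

end

context schreier_setup begin

definition rho :: "'a \<Rightarrow> nat \<Rightarrow> nat" where "rho = free_basis_map.extension F B (sym_group kk) sigma"

lemma sigma_carrier: "sigma ` B \<subseteq> carrier (sym_group kk)"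
  using sigma_permutes by (auto simp: sym_group_carrier)

lemma rho_setup: "free_basis_map F B (sym_group kk) sigma"
  by (simp add: free_basis_map_def is_group fb sym_group_is_group sigma_carrier)

lemma rho_hom: "rho \<in> hom F (sym_group kk)"
  unfolding rho_def by (rule free_basis_map.extension_hom[OF rho_setup])

lemma rho_basis: "c \<in> B \<Longrightarrow> rho c = sigma c"
  unfolding rho_def by (rule free_basis_map.extension_basis[OF rho_setup])

lemma rho_word: "set (map fst w) \<subseteq> B \<Longrightarrow> rho (word_eval F w) = word_eval (sym_group kk) (map_letters sigma w)"
  unfolding rho_def by (rule free_basis_map.extension_word[OF rho_setup])

lemma sym_inv: "c \<in> B \<Longrightarrow> inv\<^bsub>sym_group kk\<^esub> (sigma c) = inv' (sigma c)"
  using sigma_carrier by (intro sym_group_inv_equality) blast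

lemma letter_step:
  assumes x: "x \<in> B" and C: "C \<in> V" and image: "act (if b then x else inv x) C \<in> V"
  shows "(if b then sigma x else inv' (sigma x)) (label C) = label (act (if b then x else inv x) C)"
proof (cases b)
  case True
  then have "label C \<in> dom_letter x" using C image unfolding dom_letter_def by auto
  then show ?thesis using sigma_agree[OF x] True by (simp add: move_letter_def unlabel_label[OF C])
next
  case False
  let ?D = "act (inv x) C"
  have xF: "x \<in> carrier F" using x B_carrier by blast
  have D: "?D \<in> V" using image False by simp
  have returns: "act x ?D = C" using act_act_inv[OF V_rcosets[OF C] xF] .
  then have "label ?D \<in> dom_letter x" using C D unfolding dom_letter_def by auto
  then have "sigma x (label ?D) = move_letter x (label ?D)" using sigma_agree[OF x] by simp
  also have "\<dots> = label C" using returns by (simp add: move_letter_def unlabel_label[OF D])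
  finally have "inv' (sigma x) (label C) = label ?D"
    using permutes_inverses(2)[OF sigma_permutes[OF x]] by metis
  then show ?thesis using False by simp
qed

lemma path:
  "set (map fst ws) \<subseteq> B \<Longrightarrow> (\<forall>j \<le> length ws. act (word_eval F (drop j ws)) H \<in> V) \<Longrightarrow>
   word_eval (sym_group kk) (map_letters sigma ws) (label H) = label (act (word_eval F ws) H)"
proof (induction ws)
  case Nil
  have "act \<one> H = H" using act_one[OF H_rcoset] .
  then show ?case by (simp add: sym_group_one)
next
  case (Cons l rest)
  obtain x b where l: "l = (x, b)" by force
  have xB: "x \<in> B" and rB: "set (map fst rest) \<subseteq> B" using Cons.prems(1) l by auto
  define C where "C = act (word_eval F rest) H"
  have CV: "C \<in> V" using Cons.prems(2)[rule_format, of 1] unfolding C_def by simp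
  have IH: "word_eval (sym_group kk) (map_letters sigma rest) (label H) = label C"
    unfolding C_def
  proof (rule Cons.IH[OF rB], intro allI impI)
    fix j assume "j \<le> length rest"
    then show "act (word_eval F (drop j rest)) H \<in> V" using Cons.prems(2)[rule_format, of "Suc j"] by simp
  qed
  let ?lv = "if b then x else inv x"
  have lvF: "?lv \<in> carrier F" using xB B_carrier by auto
  have next_coset: "act (word_eval F (l # rest)) H = act ?lv C"
    unfolding C_def l using act_mult[OF H_rcoset lvF word_carrier[OF rB]] by simp
  have "act ?lv C \<in> V" using Cons.prems(2)[rule_format, of 0] next_coset by simp
  moreover have "word_eval (sym_group kk) (map_letters sigma (l # rest)) (label H) =
        (if b then sigma x else inv' (sigma x)) (label C)"
    using sym_inv[OF xB] IH by (simp add: l sym_group_mult)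
  ultimately show ?case using letter_step[OF xB CV] next_coset by simp
qed

lemma path_W:
  assumes "w \<in> W" "i \<le> length w"
  shows "rho (word_eval F (drop i w)) (label H) = label (act (word_eval F (drop i w)) H)"
proof -
  have s: "set (map fst (drop i w)) \<subseteq> B" using W_letters[OF assms(1)] by (auto dest: in_set_dropD)
  have "\<forall>j \<le> length (drop i w). act (word_eval F (drop j (drop i w))) H \<in> V"
    using suffix_V[OF assms(1)] assms(2) by (auto simp: add.commute)
  then show ?thesis using path[OF s] rho_word[OF s] by simp
qed

lemma rho_group_hom: "group_hom F (sym_group kk) rho"
  by (simp add: group_hom_def group_hom_axioms_def is_group sym_group_is_group rho_hom)

lemma rho_one: "rho \<one>\<^bsub>F\<^esub> = id"
  using group_hom.hom_one[OF rho_group_hom] by (simp add: sym_group_one)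

lemma rho_permutes: "h \<in> carrier F \<Longrightarrow> rho h permutes {1..kk}"
  using rho_hom by (auto simp: hom_def sym_group_carrier)

lemma reach_V: "C \<in> V \<Longrightarrow> \<exists>h\<in>carrier F. rho h (label H) = label C"
proof -
  assume "C \<in> V"
  then consider "C = H" | w i where "w \<in> W" "i \<le> length w" "C = act (word_eval F (drop i w)) H"
    unfolding V_def by blast
  then show ?thesis
  proof cases
    case 1 then show ?thesis using rho_one one_closed by (metis id_apply)
  next
    case (2 w i)
    then show ?thesis using path_W[OF 2(1,2)] suffix_carrier[OF 2(1)] by blast
  qed
qed

end

text \<open>
  Since K * K = 1 mod p, the powers u and v act on the long cycles as single steps, while they
  fix the invariant sets Aa (for a0) and Ab (for b0) pointwise: these have at most m + 3
  points, and K = (m + 3)! is a multiple of every cycle length there.\<close>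

context schreier_setup begin

abbreviation u :: "nat \<Rightarrow> nat" where "u \<equiv> perm_a ^^ (K * K)"
abbreviation v :: "nat \<Rightarrow> nat" where "v \<equiv> perm_b ^^ (K * K)"

lemma K_square_mod: "(K * K + j) mod p = Suc j mod p"
proof -
  obtain k' where k': "K = Suc k'" using K_ge(2) by (metis Suc_le_D One_nat_def)
  have "K * K + j = p * k' + Suc j" unfolding p_def k' by (simp add: algebra_simps)
  then show ?thesis by simp
qed

lemma perm_a_on_Ps: "y \<in> set Ps \<Longrightarrow> perm_a y = zeta y"
proof -
  assume y: "y \<in> set Ps"
  have zy: "zeta y \<in> set Ps" using y cycle_permutes[of Ps] unfolding zeta_def
    by (simp add: permutes_in_image)
  have small: "z \<in> set Ps \<Longrightarrow> m + 2 \<le> z \<and> z < m + 2 + p" for z by (auto simp: set_Ps P_def)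
  have "exit_cycle (zeta y) = zeta y" unfolding exit_cycle_def
    by (rule id_outside_supp) (use small[OF zy] x0(1) in \<open>auto simp: n0_def d1_def d2_def\<close>)
  moreover have "ext_letter a0 (zeta y) = zeta y" using ext_letter_out[OF a0(1)] small[OF zy] by simp
  ultimately show ?thesis by (simp add: perm_a_def)
qed

lemma u_on_P: "j < p \<Longrightarrow> u (P j) = P (Suc j mod p)"
proof -
  assume j: "j < p"
  have inP: "P j \<in> set Ps" using j by (simp add: set_Ps)
  have sub: "zeta ` set Ps \<subseteq> set Ps" using cycle_permutes[of Ps] unfolding zeta_def
    by (simp add: permutes_image)
  have "u (P j) = (zeta ^^ (K * K)) (P j)"
    using funpow_agree[OF perm_a_on_Ps sub inP] by blast
  also have "\<dots> = (zeta ^^ (K * K)) (Ps ! j)" using Ps_nth j by simp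
  also have "\<dots> = Ps ! ((K * K + j) mod p)" unfolding zeta_def using cycle_funpow_nth[OF dist_Ps] j len_Ps by simp
  also have "\<dots> = P (Suc j mod p)" using K_square_mod Ps_nth p_ge by simp
  finally show ?thesis .
qed

definition Aa :: "nat set" where "Aa = {1..m} \<union> {n0, d1, d2}"
definition Ab :: "nat set" where "Ab = {1..m} \<union> {d1, d2, P (p - 1)}"

lemma card_Aa: "card Aa \<le> m + 3"
  using card_Un_le[of "{1..m}" "{n0, d1, d2}"] by (simp add: Aa_def n0_def d1_def d2_def)

lemma card_Ab: "card Ab \<le> m + 3"
  using card_Un_le[of "{1..m}" "{d1, d2, P (p - 1)}"] p_ge by (simp add: Ab_def P_def d1_def d2_def)

lemma perm_a_Aa: "perm_a ` Aa \<subseteq> Aa"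
proof
  fix y assume "y \<in> perm_a ` Aa"
  then obtain x where x: "x \<in> Aa" "y = perm_a x" by blast
  have "x \<notin> set Ps" using x(1) p_ge by (auto simp: Aa_def set_Ps P_def n0_def d1_def d2_def)
  then have z: "zeta x = x" unfolding zeta_def by (rule id_outside_supp)
  have c: "exit_cycle x \<in> Aa" using permutes_superset_closed[OF cycle_permutes[of "[x0, n0, d1, d2]"] _ x(1)] x0(1)
    unfolding exit_cycle_def Aa_def by auto
  have "ext_letter a0 (exit_cycle x) \<in> Aa" using permutes_superset_closed[OF ext_letter[OF a0(1), THEN conjunct1] _ c] by (auto simp: Aa_def)
  then show "y \<in> Aa" using x(2) z by (simp add: perm_a_def)
qed

lemma u_fixes_Aa: "x \<in> Aa \<Longrightarrow> u x = x"
  using funpow_fact_fixes[OF perm_a_permutes _ perm_a_Aa card_Aa, of x K] by (simp add: Aa_def K_def)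

lemma u_out: "x \<notin> {1..kk} \<Longrightarrow> (perm_a ^^ n) x = x"
  using funpow_fixpoint permutes_not_in[OF perm_a_permutes] by metis

lemma v_out: "x \<notin> {1..kk} \<Longrightarrow> (perm_b ^^ n) x = x"
  using funpow_fixpoint permutes_not_in[OF perm_b_permutes] by metis

lemma perm_b_on_Qs: "y \<in> set Qs \<Longrightarrow> perm_b y = xi y"
proof -
  assume y: "y \<in> set Qs"
  have xy: "xi y \<in> set Qs" using y cycle_permutes[of Qs] unfolding xi_def
    by (simp add: permutes_in_image)
  have small: "z \<in> set Qs \<Longrightarrow> m + 1 \<le> z \<and> z < m + 1 + p" for z
    using p_ge by (auto simp: set_Qs P_def n0_def)
  have t: "transpose d1 d2 y = y" using small[OF y] by (auto simp: d1_def d2_def)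
  have "ext_letter b0 (xi y) = xi y" using ext_letter_out[OF b0(1)] small[OF xy] by simp
  then have "perm_b_raw y = xi y" by (simp add: perm_b_raw_def)
  then show ?thesis using t by (simp add: perm_b_def)
qed

lemma v_on_Qs: "j < p \<Longrightarrow> v (Qs ! j) = Qs ! (Suc j mod p)"
proof -
  assume j: "j < p"
  have inQ: "Qs ! j \<in> set Qs" using j len_Qs by simp
  have sub: "xi ` set Qs \<subseteq> set Qs" using cycle_permutes[of Qs] unfolding xi_def
    by (simp add: permutes_image)
  have "v (Qs ! j) = (xi ^^ (K * K)) (Qs ! j)"
    using funpow_agree[OF perm_b_on_Qs sub inQ] by blast
  also have "\<dots> = Qs ! ((K * K + j) mod p)" unfolding xi_def using cycle_funpow_nth[OF dist_Qs] j len_Qs by simp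
  also have "\<dots> = Qs ! (Suc j mod p)" using K_square_mod by simp
  finally show ?thesis .
qed

lemma perm_b_Ab: "perm_b ` Ab \<subseteq> Ab"
proof
  fix y assume "y \<in> perm_b ` Ab"
  then obtain x where x: "x \<in> Ab" "y = perm_b x" by blast
  have nq: "w \<notin> set Qs" if "w \<in> Ab" for w using that p_ge
    by (auto simp: Ab_def set_Qs P_def n0_def d1_def d2_def)
  have zz: "xi w = w" if "w \<in> Ab" for w unfolding xi_def by (rule id_outside_supp[OF nq[OF that]])
  have t: "transpose d1 d2 x \<in> Ab" using x(1) by (auto simp: Ab_def transpose_def)
  have s: "ext_letter b0 z \<in> Ab" if "z \<in> Ab" for z
    using permutes_superset_closed[OF ext_letter[OF b0(1), THEN conjunct1] _ that] by (auto simp: Ab_def)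
  have "perm_b x = ext_letter b0 x \<or> perm_b x = ext_letter b0 (transpose d1 d2 x)"
    using zz[OF x(1)] zz[OF t] by (auto simp: perm_b_def perm_b_raw_def)
  then show "y \<in> Ab" using x s t by auto
qed

lemma v_fixes_Ab: "x \<in> Ab \<Longrightarrow> v x = x"
  using funpow_fact_fixes[OF perm_b_permutes _ perm_b_Ab card_Ab, of x K] by (simp add: Ab_def K_def)

definition Cyc :: "nat set" where "Cyc = insert n0 (P ` {..<p})"

lemma outside_Cyc:
  assumes x: "x \<in> {1..kk}" "x \<notin> Cyc"
  shows "x \<in> {1..m} \<or> x = d1 \<or> x = d2"
proof (rule ccontr)
  assume "\<not> ?thesis"
  then have "m + 1 \<le> x" "x \<le> m + p + 1" using x(1) by (auto simp: kk_def d1_def d2_def)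
  moreover have "x \<noteq> n0" using x(2) by (simp add: Cyc_def)
  ultimately have "x = P (x - (m + 2))" "x - (m + 2) < p" by (auto simp: P_def n0_def)
  then have "x \<in> Cyc" unfolding Cyc_def by (metis image_eqI insertI2 lessThan_iff)
  then show False using x(2) by simp
qed

lemma uv_outside_Cyc: "x \<notin> Cyc \<Longrightarrow> u x = x \<and> v x = x"
proof (cases "x \<in> {1..kk}")
  case True
  assume "x \<notin> Cyc"
  then have "x \<in> Aa \<and> x \<in> Ab" using outside_Cyc[OF True] by (auto simp: Aa_def Ab_def)
  then show ?thesis using u_fixes_Aa v_fixes_Ab by simp
next
  case False then show ?thesis using u_out v_out by simp
qed

lemma v_on_Cyc:
  shows "v n0 = P 0" and "\<And>j. Suc (Suc j) < p \<Longrightarrow> v (P j) = P (Suc j)"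
    and "v (P (p - 2)) = n0" and "v (P (p - 1)) = P (p - 1)"
proof -
  have pp: "3 \<le> p" using p_ge by simp
  show "v n0 = P 0" using v_on_Qs[of 0] Qs_nth0 Qs_nth[of 0] pp by simp
  show "v (P j) = P (Suc j)" if "Suc (Suc j) < p" for j
    using v_on_Qs[of "Suc j"] Qs_nth[of j] Qs_nth[of "Suc j"] that by simp
  have "P (p - 2) = Qs ! (p - 1)" "Suc (p - 1) = p" using Qs_nth[of "p - 2"] pp
    by (simp_all add: Suc_diff_Suc numeral_2_eq_2)
  then show "v (P (p - 2)) = n0" using v_on_Qs[of "p - 1"] pp Qs_nth0 by simp
  show "v (P (p - 1)) = P (p - 1)" using v_fixes_Ab by (simp add: Ab_def)
qed

end

section \<open>rho is surjective\<close>

text \<open>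
  The image Img of rho contains all 3-cycles on Cyc = {n0} \<union> P ` {..<p} (from u and v),
  moves every point into Cyc (via the coset paths and the 4-cycle through x0), contains the
  odd permutation perm_b, and Cyc has more than kk/2 + 1 points.\<close>

context schreier_setup begin

definition Img :: "(nat \<Rightarrow> nat) set" where "Img = rho ` carrier F"

lemma Img_subgroup: "perm_subgroup Img kk"
  unfolding perm_subgroup_def Img_def by (rule group_hom.img_is_subgroup[OF rho_group_hom])

lemma a0F: "a0 \<in> carrier F" using a0(1) B_carrier by blast
lemma b0F: "b0 \<in> carrier F" using b0(1) B_carrier by blast

lemma perm_a_Img: "perm_a \<in> Img"
proof -
  have "rho a0 = perm_a" using rho_basis[OF a0(1)] by (simp add: sigma_def)
  then show ?thesis unfolding Img_def using a0F by force
qed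

lemma perm_b_Img: "perm_b \<in> Img"
proof -
  have "rho b0 = perm_b" using rho_basis[OF b0(1)] b0(2) by (simp add: sigma_def)
  then show ?thesis unfolding Img_def using b0F by force
qed

lemma all_3cycles_Cyc: "all_3cycles_on Img Cyc"
proof -
  have uv: "u \<in> Img" "v \<in> Img"
    using perm_subgroup.funpow_closed[OF Img_subgroup] perm_a_Img perm_b_Img by auto
  have P: "inj_on P {..<p}" using inj_P inj_on_subset by blast
  have n0: "n0 \<notin> P ` {..<p}" by (auto simp: P_def n0_def)
  have u_n0: "u n0 = n0" using u_fixes_Aa by (simp add: Aa_def)
  show ?thesis unfolding Cyc_def
    by (rule perm_subgroup.all_3cycles_on_two_cycles[OF Img_subgroup p_ge(2) P n0 uv(1) u_on_P u_n0
          uv(2) v_on_Cyc uv_outside_Cyc[unfolded Cyc_def]])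
qed

lemma exit_cycle_vals: "exit_cycle x0 = n0" "exit_cycle n0 = d1" "exit_cycle d1 = d2"
proof -
  have d: "distinct [x0, n0, d1, d2]" using x0(1) by (auto simp: n0_def d1_def d2_def)
  have "(exit_cycle ^^ 1) ([x0, n0, d1, d2] ! j) = [x0, n0, d1, d2] ! ((1 + j) mod 4)" if "j < 4" for j
    unfolding exit_cycle_def using cycle_funpow_nth[OF d, of j 1] that by simp
  from this[of 0] this[of 1] this[of 2] show "exit_cycle x0 = n0" "exit_cycle n0 = d1" "exit_cycle d1 = d2" by simp_all
qed

lemma perm_a_vals: "perm_a x0 = n0" "perm_a n0 = d1" "perm_a d1 = d2"
proof -
  have z: "zeta w = w" if "w \<le> m + 1 \<or> m + p + 2 \<le> w" for w
    unfolding zeta_def by (rule id_outside_supp) (use that in \<open>auto simp: set_Ps P_def\<close>)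
  have s: "ext_letter a0 w = w" if "m < w" for w using ext_letter_out[OF a0(1)] that by simp
  show "perm_a x0 = n0" using z[of x0] x0(1) exit_cycle_vals s[of n0] by (simp add: perm_a_def n0_def)
  show "perm_a n0 = d1" using z[of n0] exit_cycle_vals s[of d1] by (simp add: perm_a_def n0_def d1_def)
  show "perm_a d1 = d2" using z[of d1] exit_cycle_vals s[of d2] by (simp add: perm_a_def d1_def d2_def)
qed

lemma V_point_to_n0:
  assumes x: "x \<in> {1..m}" shows "\<exists>g\<in>Img. g x = n0"
proof -
  obtain C where C: "C \<in> V" "x = label C" using label_surj[OF x] by blast
  obtain h where h: "h \<in> carrier F" "rho h (label H) = label C" using reach_V[OF C(1)] by blast
  obtain h0 where h0: "h0 \<in> carrier F" "rho h0 (label H) = x0" using reach_V[OF a0(2)] x0_def by metis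
  define g where "g = perm_a \<circ> rho h0 \<circ> inv' (rho h)"
  have "rho h \<in> Img" "rho h0 \<in> Img" using h h0 by (auto simp: Img_def)
  then have "g \<in> Img" unfolding g_def
    using perm_a_Img perm_subgroup.comp_closed[OF Img_subgroup] perm_subgroup.inv_closed[OF Img_subgroup]
    by metis
  moreover have "inv' (rho h) x = label H"
    using permutes_inverses(2)[OF rho_permutes[OF h(1)]] h(2) C(2) by metis
  then have "g x = n0" unfolding g_def using h0(2) perm_a_vals by simp
  ultimately show ?thesis by blast
qed

lemma moves_into_Cyc:
  assumes x: "x \<in> {1..kk}" shows "\<exists>g\<in>Img. g x \<in> Cyc"
proof (cases "x \<in> Cyc")
  case True then show ?thesis using perm_subgroup.id_closed[OF Img_subgroup] by (intro bexI[of _ id]) auto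
next
  case False
  have n0: "n0 \<in> Cyc" by (simp add: Cyc_def)
  have inv_a: "inv' perm_a \<in> Img" using perm_subgroup.inv_closed[OF Img_subgroup perm_a_Img] .
  have backwards: "inv' perm_a d1 = n0" "inv' perm_a d2 = d1"
    using permutes_inverses(2)[OF perm_a_permutes] perm_a_vals by metis+
  consider "x \<in> {1..m}" | "x = d1" | "x = d2" using outside_Cyc[OF x False] by blast
  then show ?thesis
  proof cases
    case 1 then show ?thesis using V_point_to_n0 n0 by metis
  next
    case 2 then show ?thesis using inv_a backwards n0 by metis
  next
    case 3
    have "inv' perm_a \<circ> inv' perm_a \<in> Img"
      using perm_subgroup.comp_closed[OF Img_subgroup inv_a inv_a] .
    then show ?thesis using 3 backwards n0 by (metis comp_apply)
  qed
qed

lemma image_full: "Img = carrier (sym_group kk)"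
proof (rule perm_subgroup.eq_sym_group[OF Img_subgroup _ perm_b_Img perm_b_odd])
  have sub: "Cyc \<subseteq> {1..kk}" by (auto simp: Cyc_def P_def n0_def kk_def)
  have n0P: "n0 \<notin> P ` {..<p}" by (auto simp: P_def n0_def)
  have cP: "card (P ` {..<p}) = p" using card_image[OF inj_on_subset[OF inj_P, of "{..<p}"]] by simp
  have "card Cyc = Suc p" unfolding Cyc_def using n0P cP by simp
  then have "kk + 2 \<le> 2 * card Cyc" using p_ge by (simp add: kk_def)
  then show "all_3cycles_on Img {1..kk}"
    by (rule perm_subgroup.all_3cycles_on_spread[OF Img_subgroup sub all_3cycles_Cyc _ moves_into_Cyc])
qed

end

context schreier_setup begin

text \<open>For g \<in> S \<union> \<Gamma> the whole word of g is read inside V, so rho g moves the point of H to the point of act g H.\<close>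

lemma rho_base_point:
  assumes g: "g \<in> S \<union> \<Gamma>"
  shows "act g H \<in> V" and "rho g (label H) = label (act g H)"
proof -
  have "g \<in> carrier F" using g Ssub Gsub by blast
  then have ev: "word_eval F (word_of g) = g" using word_of by simp
  have w: "word_of g \<in> W" unfolding W_def using g by blast
  show "act g H \<in> V" using suffix_V[OF w, of 0] ev by simp
  show "rho g (label H) = label (act g H)" using path_W[OF w, of 0] ev by simp
qed

lemma act_H_eq_H_iff: "g \<in> carrier F \<Longrightarrow> act g H = H \<longleftrightarrow> g \<in> H"
  unfolding act_def
  by (metis coset_join1 coset_join2 inv_closed inv_inv Hsub subgroup.m_inv_closed)

lemma H_fixes_base: "h \<in> H \<Longrightarrow> rho h (label H) = label H"
proof -
  have gen_fix: "rho s (label H) = label H" if "s \<in> S" for s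
    using rho_base_point[of s] act_H_eq_H_iff[of s] that Ssub Hdef generate.incl[of s S F] by auto
  assume "h \<in> H"
  then have "h \<in> generate F S" using Hdef by simp
  then show ?thesis
  proof (induction h rule: generate.induct)
    case one then show ?case using rho_one by simp
  next
    case (incl s) then show ?case by (rule gen_fix)
  next
    case (inv s)
    have sF: "s \<in> carrier F" using inv Ssub by blast
    have "rho (inv s) = inv\<^bsub>sym_group kk\<^esub> (rho s)" using group_hom.hom_inv[OF rho_group_hom sF] .
    also have "\<dots> = inv' (rho s)" using rho_permutes[OF sF] by (simp add: sym_group_inv_equality sym_group_carrier)
    finally show ?case using permutes_inverses(2)[OF rho_permutes[OF sF]] gen_fix[OF inv] by metis
  next
    case (eng h1 h2)
    have "h1 \<in> carrier F" "h2 \<in> carrier F" using eng.hyps Hdef H_carrier by auto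
    then have "rho (h1 \<otimes> h2) = rho h1 \<circ> rho h2"
      using group_hom.hom_mult[OF rho_group_hom] by (simp add: sym_group_mult)
    then show ?case using eng.IH by simp
  qed
qed

text \<open>Each \<gamma> \<in> \<Gamma> moves the point of H, since the coset act \<gamma> H lies in V and differs from H.\<close>

lemma Gamma_moves_base: "\<gamma> \<in> \<Gamma> \<Longrightarrow> rho \<gamma> (label H) \<noteq> label H"
  using rho_base_point[of \<gamma>] act_H_eq_H_iff[of \<gamma>] Gsub label_inj[OF _ H_V] by auto

lemma separating_surjection: "\<exists>(k::nat) f. f \<in> hom F (sym_group k) \<and> f ` carrier F = carrier (sym_group k) \<and>
           (\<forall>\<gamma>\<in>\<Gamma>. f \<gamma> \<notin> f ` H)"
proof (intro exI conjI ballI)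
  show "rho \<in> hom F (sym_group kk)" by (rule rho_hom)
  show "rho ` carrier F = carrier (sym_group kk)" using image_full by (simp add: Img_def)
  fix \<gamma> assume g: "\<gamma> \<in> \<Gamma>"
  show "rho \<gamma> \<notin> rho ` H"
  proof
    assume "rho \<gamma> \<in> rho ` H"
    then obtain h where "h \<in> H" "rho \<gamma> = rho h" by blast
    then show False using H_fixes_base Gamma_moves_base[OF g] by metis
  qed
qed

end

theorem theoremB:
  fixes F :: "('a, 'b) monoid_scheme" and H :: "'a set" and \<Gamma> :: "'a set"
  assumes "free_group_rank_gt_one F"
    and "fin_gen_subgroup H F"
    and "infinite (rcosets\<^bsub>F\<^esub> H)"
    and "finite \<Gamma>" and "\<Gamma> \<subseteq> carrier F - H"
  shows "\<exists>(k::nat) f. f \<in> hom F (sym_group k) \<and> f ` carrier F = carrier (sym_group k) \<and>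
           (\<forall>\<gamma>\<in>\<Gamma>. f \<gamma> \<notin> f ` H)"
proof -
  obtain B where grp: "group F" and fb: "free_basis F B" and two: "\<exists>a b. a \<in> B \<and> b \<in> B \<and> a \<noteq> b"
    using assms(1) unfolding free_group_rank_gt_one_def by blast
  obtain S where Hsub: "subgroup H F" and S: "finite S" "S \<subseteq> carrier F" "H = generate F S"
    using assms(2) unfolding fin_gen_subgroup_def by blast
  have "schreier_setup F B S H \<Gamma>"
    unfolding schreier_setup_def schreier_setup_axioms_def using grp fb two Hsub S assms(3-5) by blast
  then interpret schreier_setup F B S H \<Gamma> .
  show ?thesis by (rule separating_surjection)
qed

end
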